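(* Fix real numbers $\mu_D$, $\sigma_D>0$, $\mu_L>0$, $\sigma_L>0$, an odd integer $n\ge1$ and an integer $m\ge1$, and let $B(\rho)$ be the function defined in the context. Then $B(0)\le\lim_{\rho\to-1^+}B(\rho)$ if and only if $$m\ge\frac{\sigma_L\sqrt{\sigma_L^2+4n\mu_L(\mu_L+n)}-\sigma_L^2}{2\mu_L(\mu_L+n)}.$$ Moreover, if $n\ge3$ is odd and this inequality holds, then $B$ has at least one stationary point (a point where $B'=0$) in the interval $(-1,0)$.
   Context: For fixed real parameters $\mu_D$, $\sigma_D>0$, $\mu_L\ge0$, $\sigma_L\ge0$ and integers $n,m\ge1$, define for $\rho\in(-1,1)$ $$B(\rho)=\frac{2\sigma_L^2}{n^2m^2}\left(m(1-\rho^n)+\frac{n(1+\rho)}{1-\rho}-\frac{(1+\rho^2)(1-\rho^n)}{(1-\rho)^2}\right)+\frac{2\sigma_L^2\mu_D^2}{\sigma_D^2 m^2}+\left(\frac{2\mu_L^2}{n^2}+\frac{2\mu_L}{n}\right)(1-\rho^n)+1 .$$ (This is the bullwhip measure $\operatorname{Var}q_t/\operatorname{Var}D_t$ for AR(1) demand with autocorrelation $\rho$, mean $\mu_D$ and variance $\sigma_D^2$, i.i.d. lead times with mean $\mu_L$ and variance $\sigma_L^2$, moving-average demand forecast over $n$ periods and moving-average lead-time forecast over $m$ periods, under the order-up-to policy.) Note $B(0)$ is the bullwhip measure for i.i.d. demand. *)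

theory Defs
  imports Complex_Main
begin

text \<open>Bullwhip measure B(rho) for AR(1) demand (rho in (-1,1)).\<close>
definition bullwhip :: "real \<Rightarrow> real \<Rightarrow> real \<Rightarrow> real \<Rightarrow> nat \<Rightarrow> nat \<Rightarrow> real \<Rightarrow> real" where
  "bullwhip muD sigD muL sigL n m rho =
     2 * sigL^2 / (real n ^ 2 * real m ^ 2) *
       (real m * (1 - rho ^ n) + real n * (1 + rho) / (1 - rho)
        - (1 + rho^2) * (1 - rho ^ n) / (1 - rho)^2)
     + 2 * sigL^2 * muD^2 / (sigD^2 * real m ^ 2)
     + (2 * muL^2 / real n ^ 2 + 2 * muL / real n) * (1 - rho ^ n) + 1"

end

theory Submission
  imports Defs
begin

text \<open>For odd \<open>n\<close> the difference \<open>B(-1) - B(0)\<close> is a positive multiple of the quadratic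
  \<open>\<mu>\<^sub>L(\<mu>\<^sub>L+n) m\<^sup>2 + \<sigma>\<^sub>L\<^sup>2 m - n \<sigma>\<^sub>L\<^sup>2\<close> in \<open>m\<close>, whose larger root is the threshold of the
  theorem; and \<open>B\<close> is continuous up to \<open>\<rho> = -1\<close>, so the one-sided limit is \<open>B(-1)\<close>.
  For \<open>n \<ge> 2\<close> one computes \<open>B'(0) > 0\<close>, so \<open>B\<close> dips below \<open>B(0) \<le> B(-1)\<close> just left
  of \<open>0\<close>; its minimum on \<open>[-1,0]\<close> is then attained in the interior, where \<open>B' = 0\<close>.\<close>

lemma quadratic_nonneg_iff_larger_root_le:
  fixes a b c x :: real
  assumes "a > 0" and "c \<ge> 0" and "x > 0"
  shows "0 \<le> a * x^2 + b * x - c \<longleftrightarrow> (sqrt (b^2 + 4 * a * c) - b) / (2 * a) \<le> x"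
proof -
  define s where "s = sqrt (b^2 + 4 * a * c)"
  define r where "r = (s - b) / (2 * a)"
  define r' where "r' = (- s - b) / (2 * a)"
  have s_sq: "s^2 = b^2 + 4 * a * c"
    unfolding s_def using assms by simp
  have "\<bar>b\<bar> \<le> s"
    unfolding s_def using assms by (intro real_le_rsqrt) auto
  then have "r' \<le> 0"
    unfolding r'_def using assms by (simp add: divide_nonpos_pos)
  then have other_factor_pos: "a * (x - r') > 0"
    using assms by simp
  have "a * x^2 + b * x - c = (x - r) * (a * (x - r'))"
    unfolding r_def r'_def using assms s_sq
    by (simp add: field_simps power2_eq_square)
  then have "0 \<le> a * x^2 + b * x - c \<longleftrightarrow> 0 \<le> x - r"
    using other_factor_pos by (smt (verit) zero_le_mult_iff)
  then show ?thesis
    unfolding r_def s_def by simp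
qed

lemma interior_stationary_point_if_deriv_pos_at_right_end:
  fixes f :: "real \<Rightarrow> real"
  assumes "a < b"
    and cont: "\<And>x. a \<le> x \<Longrightarrow> x \<le> b \<Longrightarrow> isCont f x"
    and diff: "\<And>x. a < x \<Longrightarrow> x < b \<Longrightarrow> f differentiable (at x)"
    and deriv_b: "(f has_real_derivative D) (at b)" and "D > 0"
    and "f b \<le> f a"
  shows "\<exists>x. a < x \<and> x < b \<and> (f has_real_derivative 0) (at x)"
proof -
  obtain d where "d > 0" and below_b: "\<And>h. 0 < h \<Longrightarrow> h < d \<Longrightarrow> f (b - h) < f b"
    using DERIV_pos_inc_left[OF deriv_b \<open>D > 0\<close>] by blast
  define h where "h = min (d / 2) ((b - a) / 2)"
  have h: "0 < h" "h < d" "h < b - a"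
    unfolding h_def using \<open>d > 0\<close> \<open>a < b\<close> by (auto simp: min_def)
  obtain x where min: "\<And>y. a \<le> y \<Longrightarrow> y \<le> b \<Longrightarrow> f x \<le> f y" and "a \<le> x" "x \<le> b"
    using isCont_eq_Lb[of a b f] \<open>a < b\<close> cont by fastforce
  have "f x < f b"
    using min[of "b - h"] below_b[OF h(1,2)] h by simp
  then have x: "a < x" "x < b"
    using \<open>a \<le> x\<close> \<open>x \<le> b\<close> \<open>f b \<le> f a\<close> by (auto simp: order.order_iff_strict)
  obtain D' where D': "(f has_real_derivative D') (at x)"
    using diff[OF x] real_differentiable_def by blast
  have "D' = 0"
  proof (rule DERIV_local_min[OF D'])
    show "0 < min (x - a) (b - x)"
      using x by simp
    show "\<forall>y. \<bar>x - y\<bar> < min (x - a) (b - x) \<longrightarrow> f x \<le> f y"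
      using min by (auto simp: abs_if)
  qed
  then show ?thesis
    using D' x by blast
qed

lemma isCont_bullwhip: "\<rho> < 1 \<Longrightarrow> isCont (bullwhip muD sigD muL sigL n m) \<rho>"
  unfolding bullwhip_def by (intro continuous_intros) auto

lemma bullwhip_differentiable: "\<rho> < 1 \<Longrightarrow> bullwhip muD sigD muL sigL n m differentiable (at \<rho>)"
  unfolding bullwhip_def by (intro derivative_intros) auto

lemma Lim_at_right_bullwhip:
  assumes "\<rho> < 1"
  shows "Lim (at_right \<rho>) (bullwhip muD sigD muL sigL n m) = bullwhip muD sigD muL sigL n m \<rho>"
proof (rule tendsto_Lim)
  show "(bullwhip muD sigD muL sigL n m \<longlongrightarrow> bullwhip muD sigD muL sigL n m \<rho>) (at_right \<rho>)"
    using isCont_bullwhip[OF assms] by (simp add: isCont_def filterlim_at_split)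
qed simp

lemma bullwhip_neg1_minus_bullwhip_0:
  assumes "odd n" and "m \<ge> 1"
  shows "bullwhip muD sigD muL sigL n m (-1) - bullwhip muD sigD muL sigL n m 0
     = 2 / (real n ^ 2 * real m ^ 2)
       * (muL * (muL + real n) * real m ^ 2 + sigL^2 * real m - real n * sigL^2)"
proof -
  have "n \<ge> 1"
    using \<open>odd n\<close> by (cases n) auto
  have neg1: "(-1::real) ^ n = -1" and zero: "(0::real) ^ n = 0"
    using assms \<open>n \<ge> 1\<close> by auto
  show ?thesis
    using assms \<open>n \<ge> 1\<close> unfolding bullwhip_def neg1 zero
    by (simp add: field_simps power2_eq_square)
qed

lemma bullwhip_has_derivative_at_0:
  assumes "n \<ge> 2" and "m \<ge> 1"
  shows "(bullwhip muD sigD muL sigL n m has_real_derivative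
            2 * sigL^2 / (real n ^ 2 * real m ^ 2) * (2 * real n - 2)) (at 0)"
  unfolding bullwhip_def
  by (rule derivative_eq_intros refl | simp)+ (use assms in \<open>simp add: field_simps power_0_left\<close>)

lemma bullwhip_0_le_bullwhip_neg1_iff:
  assumes "muL > 0" and "sigL > 0" and "odd n" and "m \<ge> 1"
  shows "bullwhip muD sigD muL sigL n m 0 \<le> bullwhip muD sigD muL sigL n m (-1) \<longleftrightarrow>
    real m \<ge> (sigL * sqrt (sigL^2 + 4 * real n * muL * (muL + real n)) - sigL^2)
              / (2 * muL * (muL + real n))"
proof -
  define B where "B = bullwhip muD sigD muL sigL n m"
  define a where "a = muL * (muL + real n)"
  have "a > 0"
    unfolding a_def using assms by simp
  have scale_pos: "2 / (real n ^ 2 * real m ^ 2) > 0"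
    using assms odd_pos[of n] by simp
  have "B 0 \<le> B (-1) \<longleftrightarrow>
      0 \<le> 2 / (real n ^ 2 * real m ^ 2) * (a * real m ^ 2 + sigL^2 * real m - real n * sigL^2)"
    using bullwhip_neg1_minus_bullwhip_0[OF \<open>odd n\<close> \<open>m \<ge> 1\<close>, of muD sigD muL sigL]
    unfolding B_def a_def by linarith
  also have "\<dots> \<longleftrightarrow> 0 \<le> a * real m ^ 2 + sigL^2 * real m - real n * sigL^2"
    using mult_le_cancel_left_pos[OF scale_pos, of 0] by (simp only: mult_zero_right)
  also have "\<dots> \<longleftrightarrow> (sqrt ((sigL^2)^2 + 4 * a * (real n * sigL^2)) - sigL^2) / (2 * a) \<le> real m"
    using quadratic_nonneg_iff_larger_root_le[OF \<open>a > 0\<close>] assms by simp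
  also have "(sigL^2)^2 + 4 * a * (real n * sigL^2) = sigL^2 * (sigL^2 + 4 * real n * muL * (muL + real n))"
    unfolding a_def by (simp add: algebra_simps power2_eq_square)
  also have "sqrt (sigL^2 * (sigL^2 + 4 * real n * muL * (muL + real n)))
        = sigL * sqrt (sigL^2 + 4 * real n * muL * (muL + real n))"
    using \<open>sigL > 0\<close> by (simp add: real_sqrt_mult)
  finally show ?thesis
    unfolding B_def a_def by (simp add: mult.assoc)
qed

theorem mainTheorem11:
  fixes muD sigD muL sigL :: real and n m :: nat
  assumes "sigD > 0" and "muL > 0" and "sigL > 0"
    and "odd n" and "n \<ge> 1" and "m \<ge> 1"
  shows "(bullwhip muD sigD muL sigL n m 0
            \<le> Lim (at_right (-1)) (bullwhip muD sigD muL sigL n m)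
          \<longleftrightarrow> real m \<ge> (sigL * sqrt (sigL^2 + 4 * real n * muL * (muL + real n)) - sigL^2)
                          / (2 * muL * (muL + real n)))
       \<and> (n \<ge> 3 \<longrightarrow>
          real m \<ge> (sigL * sqrt (sigL^2 + 4 * real n * muL * (muL + real n)) - sigL^2)
                          / (2 * muL * (muL + real n)) \<longrightarrow>
          (\<exists>rho. -1 < rho \<and> rho < 0 \<and>
             (bullwhip muD sigD muL sigL n m has_real_derivative 0) (at rho)))"
proof -
  define B where "B = bullwhip muD sigD muL sigL n m"
  have "\<exists>rho. -1 < rho \<and> rho < 0 \<and> (B has_real_derivative 0) (at rho)"
    if "n \<ge> 3" and "B 0 \<le> B (-1)"
  proof (rule interior_stationary_point_if_deriv_pos_at_right_end)
    show "(B has_real_derivative 2 * sigL^2 / (real n ^ 2 * real m ^ 2) * (2 * real n - 2)) (at 0)"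
      unfolding B_def using bullwhip_has_derivative_at_0 that assms by simp
    show "2 * sigL^2 / (real n ^ 2 * real m ^ 2) * (2 * real n - 2) > 0"
      using that assms by simp
  qed (use that in \<open>auto simp: B_def intro: isCont_bullwhip bullwhip_differentiable\<close>)
  then show ?thesis
    using bullwhip_0_le_bullwhip_neg1_iff[of muL sigL n m muD sigD] assms
    unfolding B_def Lim_at_right_bullwhip[of "-1", simplified] by blast
qed

end
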